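(* Let $h\in\mathbb R\setminus\{0\}$ and put $$\alpha:=1,\qquad \beta:=\frac{\frac h2\exp(-\frac{h^2}8)}{\sqrt{2\pi}\,(\Phi(\frac h2)-\frac12)}.$$ Then for all $x,y\in\mathbb R$ with $|x|<|y|$, $$\exp\Big(-\alpha\frac{y^2-x^2}2\Big)<\frac{\Phi(y+\frac h2)-\Phi(y-\frac h2)}{\Phi(x+\frac h2)-\Phi(x-\frac h2)}<\exp\Big(-\beta\frac{y^2-x^2}2\Big).$$ These constants are optimal: if $\alpha$ is replaced by any smaller constant, the left inequality fails for some $x,y$ with $|x|<|y|$, and if $\beta$ is replaced by any larger constant, the right inequality fails for some such $x,y$. Moreover, $$\beta>\exp\Big(-\frac{h^2}{12}-\frac{h^4}{1440}\Big)>1-\frac{h^2}{12}.$$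
   Context: $\Phi$ is the standard normal distribution function. *)

theory Defs
  imports "HOL-Probability.Probability"
begin

definition Phi :: "real \<Rightarrow> real" where
  "Phi x = (\<integral>t\<in>{..x}. std_normal_density t \<partial>lborel)"

end

theory Submission
  imports Defs "HOL-Real_Asymp.Real_Asymp"
begin

text \<open>
  With \<open>c = \<bar>h\<bar>/2\<close> the ratio is \<open>g y / g x\<close> for the even window mass
  \<open>g x = \<Phi>(x + c) - \<Phi>(x - c)\<close>, and the two bounds say that \<open>g x \<cdot> exp (x\<^sup>2/2)\<close>
  increases and \<open>g x \<cdot> exp (\<beta> x\<^sup>2/2)\<close> decreases in \<open>\<bar>x\<bar>\<close>, i.e.
  \<open>\<beta> x g x < - g' x < x g x\<close> for \<open>x > 0\<close>. Writing
  \<open>g x = 2 \<phi>(x) \<integral>\<^sub>0\<^sup>c exp (-t\<^sup>2/2) cosh (x t) dt\<close> and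
  \<open>- g' x = 2 \<phi>(x) exp (-c\<^sup>2/2) sinh (x c)\<close>, each bound becomes an inequality between
  functions of \<open>c\<close> that agree at \<open>c = 0\<close> and follows from the sign of derivatives
  in \<open>c\<close>. The quotient \<open>- g' x / (x g x)\<close> tends to \<open>\<beta>\<close> as \<open>x \<rightarrow> 0\<close>
  and to 1 as \<open>x \<rightarrow> \<infinity>\<close>, which makes both constants optimal.
\<close>

lemma DERIV_pos_open_imp_less:
  fixes f :: "real \<Rightarrow> real"
  assumes "a < b" "\<And>t. (f has_real_derivative f' t) (at t)"
    and "\<And>t. a < t \<Longrightarrow> t < b \<Longrightarrow> f' t > 0"
  shows "f a < f b"
proof (rule DERIV_pos_imp_increasing_open[OF assms(1)])
  show "continuous_on {a..b} f"
    by (rule continuous_at_imp_continuous_on) (auto intro: DERIV_isCont assms(2))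
qed (use assms in auto)

lemma DERIV_nonneg_open_imp_le:
  fixes f :: "real \<Rightarrow> real"
  assumes "a \<le> b" "\<And>t. (f has_real_derivative f' t) (at t)"
    and "\<And>t. a < t \<Longrightarrow> t < b \<Longrightarrow> f' t \<ge> 0"
  shows "f a \<le> f b"
proof (rule DERIV_nonneg_imp_increasing_open[OF assms(1)])
  show "continuous_on {a..b} f"
    by (rule continuous_at_imp_continuous_on) (auto intro: DERIV_isCont assms(2))
qed (use assms in auto)

lemma sinh_less_mult_cosh:
  fixes t :: real
  assumes "t > 0"
  shows "sinh t < t * cosh t"
proof -
  have "((\<lambda>t. t * cosh t - sinh t) has_real_derivative t * sinh t) (at t)" for t :: real
    by (auto intro!: derivative_eq_intros)
  from DERIV_pos_open_imp_less[OF assms this] show ?thesis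
    by simp
qed

lemma one_plus_half_square_le_cosh:
  fixes t :: real
  assumes "t \<ge> 0"
  shows "1 + t^2 / 2 \<le> cosh t"
proof -
  have "((\<lambda>t. cosh t - t^2 / 2) has_real_derivative sinh t - t) (at t)" for t :: real
    by (auto intro!: derivative_eq_intros)
  moreover have "sinh t - t \<ge> 0" if "t > 0" for t :: real
    using real_le_x_sinh[of t] that by (simp add: sinh_field_def exp_minus)
  ultimately have "cosh 0 - 0^2 / 2 \<le> cosh t - t^2 / 2"
    by (rule DERIV_nonneg_open_imp_le[OF assms])
  then show ?thesis
    by simp
qed

lemma one_less_poly_mult_exp:
  fixes u :: real
  assumes "u > 0"
  shows "1 < (1 - u / 3 + 2 * u^2 / 45) * exp (u / 3 + u^2 / 90)"
proof -
  have "((\<lambda>u. (1 - u / 3 + 2 * u^2 / 45) * exp (u / 3 + u^2 / 90)) has_real_derivative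
      exp (u / 3 + u^2 / 90) * (u^2 / 135 + 2 * u^3 / 2025)) (at u)" for u :: real
    by (auto intro!: derivative_eq_intros simp: field_simps power2_eq_square power3_eq_cube)
  moreover have "exp (u / 3 + u^2 / 90) * (u^2 / 135 + 2 * u^3 / 2025) > 0" if "u > 0" for u :: real
    using that by (intro mult_pos_pos add_pos_pos) auto
  ultimately have "(1 - 0 / 3 + 2 * 0^2 / 45) * exp (0 / 3 + 0^2 / 90)
      < (1 - u / 3 + 2 * u^2 / 45) * exp (u / 3 + u^2 / 90)"
    by (rule DERIV_pos_open_imp_less[OF assms])
  then show ?thesis
    by simp
qed

lemma one_minus_less_exp:
  fixes a :: real
  assumes "a > 0"
  shows "1 - a < exp (- a - a^2 / 10)"
proof -
  have "((\<lambda>a. exp (- a - a^2 / 10) + a) has_real_derivative 1 - (1 + a / 5) * exp (- a - a^2 / 10)) (at a)"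
    for a :: real
    by (auto intro!: derivative_eq_intros simp: field_simps)
  moreover have "1 - (1 + a / 5) * exp (- a - a^2 / 10) > 0" if "a > 0" for a :: real
  proof -
    have "1 + a / 5 < 1 + (a + a^2 / 10)"
      using that by (simp add: add_pos_nonneg)
    also have "\<dots> \<le> exp (a + a^2 / 10)"
      by (rule exp_ge_add_one_self)
    finally have "(1 + a / 5) * exp (- a - a^2 / 10) < exp (a + a^2 / 10) * exp (- a - a^2 / 10)"
      by simp
    also have "\<dots> = 1"
      by (simp flip: exp_add)
    finally show ?thesis
      by simp
  qed
  ultimately have "exp (- 0 - 0^2 / 10) + 0 < exp (- a - a^2 / 10) + a"
    by (rule DERIV_pos_open_imp_less[OF assms])
  then show ?thesis
    by simp
qed

abbreviation \<phi> :: "real \<Rightarrow> real" where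
  "\<phi> \<equiv> std_normal_density"

lemma Phi_eq_interval_integral: "Phi x = (LBINT t=-\<infinity>..ereal x. \<phi> t)"
proof -
  have "(LBINT t=-\<infinity>..ereal x. \<phi> t) = (LBINT t:{..<x}. \<phi> t)"
    by (simp add: interval_lebesgue_integral_def)
  also have "\<dots> = (LBINT t:{..x}. \<phi> t)"
    by (rule set_integral_cong_set)
       (auto simp: set_borel_measurable_def intro!: eventually_mono[OF AE_lborel_singleton[of x]])
  finally show ?thesis
    by (simp add: Phi_def)
qed

lemma interval_integrable_std_normal_density:
  "interval_lebesgue_integrable lborel a b \<phi>"
proof -
  have "integrable lborel (\<lambda>x. indicator (einterval a b) x * \<phi> x)" for a b
    using integrable_mult_indicator[of "einterval a b" lborel \<phi>] by simp
  then show ?thesis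
    by (simp add: interval_lebesgue_integrable_def set_integrable_def)
qed

lemma Phi_eq_Phi_zero_plus: "Phi x = Phi 0 + (LBINT t=0..x. \<phi> t)"
  using interval_integral_sum[of "-\<infinity>" 0 x \<phi>]
  by (simp add: Phi_eq_interval_integral interval_integrable_std_normal_density zero_ereal_def)

lemma Phi_zero: "Phi 0 = 1/2"
proof -
  have "\<phi> (- t) = \<phi> t" for t
    by (simp add: std_normal_density_def)
  then have "(LBINT t=0..\<infinity>. \<phi> t) = (LBINT t=-\<infinity>..0. \<phi> t)"
    by (subst interval_integral_reflect) simp
  moreover have "(LBINT t=-\<infinity>..0. \<phi> t) + (LBINT t=0..\<infinity>. \<phi> t) = 1"
    using interval_integral_sum[of "-\<infinity>" 0 "\<infinity>" \<phi>]
    by (simp add: interval_integrable_std_normal_density interval_lebesgue_integral_def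
                  set_lebesgue_integral_def)
  ultimately show ?thesis
    using Phi_eq_interval_integral[of 0] by (simp add: zero_ereal_def)
qed

lemma Phi_has_real_derivative: "(Phi has_real_derivative \<phi> x) (at x)"
proof -
  let ?I = "{min 0 x - 1..max 0 x + 1}"
  have "continuous_on ?I \<phi>"
    unfolding std_normal_density_def by (intro continuous_intros) auto
  from interval_integral_FTC2[OF _ _ this, of 0 x]
  have "((\<lambda>u. LBINT t=0..u. \<phi> t) has_vector_derivative \<phi> x) (at x within ?I)"
    by (simp add: zero_ereal_def)
  then have "((\<lambda>u. Phi 0 + (LBINT t=0..u. \<phi> t)) has_real_derivative \<phi> x) (at x)"
    by (subst (asm) at_within_Icc_at)
       (auto simp: has_real_derivative_iff_has_vector_derivative intro!: derivative_eq_intros)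
  then show ?thesis
    by (simp flip: Phi_eq_Phi_zero_plus)
qed

lemma std_normal_density_eq: "\<phi> t = exp (- (t^2) / 2) / sqrt (2 * pi)"
  by (simp add: std_normal_density_def)

lemma std_normal_density_pos: "\<phi> t > 0"
  by (simp add: std_normal_density_eq)

lemma std_normal_density_add:
  "\<phi> (x + s) = \<phi> x * exp (- (x * s)) * exp (- (s^2) / 2)"
proof -
  have "- ((x + s)^2) / 2 = - (x^2) / 2 + - (x * s) + - (s^2) / 2"
    by (simp add: power2_eq_square field_simps)
  then have "exp (- ((x + s)^2) / 2) = exp (- (x^2) / 2) * exp (- (x * s)) * exp (- (s^2) / 2)"
    by (simp add: exp_add[symmetric])
  then show ?thesis
    by (simp add: std_normal_density_eq)
qed

lemma std_normal_density_add_plus_diff: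
  "\<phi> (x + s) + \<phi> (x - s) = 2 * \<phi> x * exp (- (s^2) / 2) * cosh (x * s)"
  using std_normal_density_add[of x s] std_normal_density_add[of x "- s"]
  by (simp add: cosh_field_def algebra_simps)

lemma std_normal_density_diff_minus_add:
  "\<phi> (x - s) - \<phi> (x + s) = 2 * \<phi> x * exp (- (s^2) / 2) * sinh (x * s)"
  using std_normal_density_add[of x s] std_normal_density_add[of x "- s"]
  by (simp add: sinh_field_def algebra_simps)

lemma std_normal_density_has_real_derivative_chain [derivative_intros]:
  assumes "(f has_real_derivative f') (at x within S)"
  shows "((\<lambda>t. \<phi> (f t)) has_real_derivative - f x * \<phi> (f x) * f') (at x within S)"
proof -
  have "(\<phi> has_real_derivative - t * \<phi> t) (at t)" for t
    unfolding std_normal_density_eq[abs_def]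
    by (auto intro!: derivative_eq_intros simp: std_normal_density_eq field_simps)
  from DERIV_chain2[OF this assms] show ?thesis
    by simp
qed

lemma Phi_has_real_derivative_chain [derivative_intros]:
  "(f has_real_derivative f') (at x within S) \<Longrightarrow>
   ((\<lambda>t. Phi (f t)) has_real_derivative \<phi> (f x) * f') (at x within S)"
  by (rule DERIV_chain2[OF Phi_has_real_derivative])

lemma Phi_minus: "Phi (- t) = 1 - Phi t"
proof -
  have "\<forall>x. ((\<lambda>t. Phi t + Phi (- t)) has_real_derivative 0) (at x)"
    by (auto intro!: derivative_eq_intros simp: std_normal_density_def)
  from DERIV_isconst_all[OF this, of t 0] show ?thesis
    by (simp add: Phi_zero)
qed

lemma Phi_less: "a < b \<Longrightarrow> Phi a < Phi b"
  by (rule DERIV_pos_open_imp_less[OF _ Phi_has_real_derivative]) (auto intro: std_normal_density_pos)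

definition Phi_window :: "real \<Rightarrow> real \<Rightarrow> real" where
  "Phi_window c x = Phi (x + c) - Phi (x - c)"

lemma Phi_window_pos: "c > 0 \<Longrightarrow> Phi_window c x > 0"
  using Phi_less[of "x - c" "x + c"] by (simp add: Phi_window_def)

lemma Phi_window_abs: "Phi_window c \<bar>x\<bar> = Phi_window c x"
  using Phi_minus[of "x + c"] Phi_minus[of "x - c"] by (simp add: Phi_window_def abs_if)

lemma Phi_window_minus_width: "Phi_window (- c) x = - Phi_window c x"
  by (simp add: Phi_window_def)

lemma Phi_window_has_real_derivative [derivative_intros]:
  "(Phi_window c has_real_derivative \<phi> (x + c) - \<phi> (x - c)) (at x)"
  unfolding Phi_window_def[abs_def] by (auto intro!: derivative_eq_intros)

lemma Phi_window_deriv_gt: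
  assumes "x > 0" "c > 0"
  shows "\<phi> (x + c) - \<phi> (x - c) > - x * Phi_window c x"
proof -
  define D where "D s = x * (Phi (x + s) - Phi (x - s)) - (\<phi> (x - s) - \<phi> (x + s))" for s
  have "(D has_real_derivative s * (\<phi> (x - s) - \<phi> (x + s))) (at s)" for s
    unfolding D_def[abs_def] by (auto intro!: derivative_eq_intros simp: algebra_simps)
  moreover have "s * (\<phi> (x - s) - \<phi> (x + s)) > 0" if "s > 0" for s
    using that assms std_normal_density_diff_minus_add[of x s] std_normal_density_pos[of x]
    by simp
  ultimately have "D 0 < D c"
    by (rule DERIV_pos_open_imp_less[OF assms(2)])
  then show ?thesis
    by (simp add: D_def Phi_window_def)
qed

lemma Phi_window_mult_exp_less:
  assumes "c > 0" "0 \<le> a" "a < b"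
  shows "Phi_window c a * exp (a^2 / 2) < Phi_window c b * exp (b^2 / 2)"
proof -
  have "((\<lambda>t. Phi_window c t * exp (t^2 / 2)) has_real_derivative
      exp (t^2 / 2) * (\<phi> (t + c) - \<phi> (t - c) + t * Phi_window c t)) (at t)" for t
    by (auto intro!: derivative_eq_intros simp: algebra_simps)
  moreover have "exp (t^2 / 2) * (\<phi> (t + c) - \<phi> (t - c) + t * Phi_window c t) > 0" if "a < t" for t
    using Phi_window_deriv_gt[of t c] assms that by simp
  ultimately show ?thesis
    by (rule DERIV_pos_open_imp_less[OF assms(3)])
qed

text \<open>\<open>gauss_integral s = \<integral>\<^sub>0\<^sup>s exp (-t\<^sup>2/2) dt\<close>.\<close>

definition gauss_integral :: "real \<Rightarrow> real" where
  "gauss_integral s = sqrt (2 * pi) * (Phi s - 1 / 2)"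

lemma gauss_integral_has_real_derivative:
  "(gauss_integral has_real_derivative exp (- (s^2) / 2)) (at s)"
proof -
  have "(gauss_integral has_real_derivative sqrt (2 * pi) * \<phi> s) (at s)"
    unfolding gauss_integral_def[abs_def] by (auto intro!: derivative_eq_intros)
  then show ?thesis
    by (simp add: std_normal_density_eq)
qed

lemma gauss_integral_zero: "gauss_integral 0 = 0"
  by (simp add: gauss_integral_def Phi_zero)

lemma gauss_integral_minus: "gauss_integral (- s) = - gauss_integral s"
  by (simp add: gauss_integral_def Phi_minus algebra_simps)

lemma gauss_integral_gt:
  assumes "s > 0"
  shows "gauss_integral s > s * exp (- (s^2) / 2)"
proof -
  have "((\<lambda>s. gauss_integral s - s * exp (- (s^2) / 2)) has_real_derivative
      s^2 * exp (- (s^2) / 2)) (at s)" for s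
    by (auto intro!: derivative_eq_intros gauss_integral_has_real_derivative
        simp: power2_eq_square algebra_simps)
  from DERIV_pos_open_imp_less[OF assms this] show ?thesis
    by (simp add: gauss_integral_zero)
qed

lemma gauss_integral_pos: "s > 0 \<Longrightarrow> gauss_integral s > 0"
  using gauss_integral_gt[of s] by (smt (verit) exp_gt_zero mult_pos_pos)

definition normal_beta :: "real \<Rightarrow> real" where
  "normal_beta c = c * exp (- (c^2) / 2) / gauss_integral c"

lemma normal_beta_minus: "normal_beta (- c) = normal_beta c"
  by (simp add: normal_beta_def gauss_integral_minus)

text \<open>\<open>cosh_gauss_integral x s = \<integral>\<^sub>0\<^sup>s exp (-t\<^sup>2/2) cosh (x t) dt\<close>,
  as its derivative in \<open>s\<close> shows.\<close>

definition cosh_gauss_integral :: "real \<Rightarrow> real \<Rightarrow> real" where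
  "cosh_gauss_integral x s = (Phi (x + s) - Phi (x - s)) / (2 * \<phi> x)"

lemma cosh_gauss_integral_has_real_derivative:
  "(cosh_gauss_integral x has_real_derivative exp (- (s^2) / 2) * cosh (x * s)) (at s)"
proof -
  have "(cosh_gauss_integral x has_real_derivative (\<phi> (x + s) + \<phi> (x - s)) / (2 * \<phi> x)) (at s)"
    unfolding cosh_gauss_integral_def[abs_def] using std_normal_density_pos[of x]
    by (auto intro!: derivative_eq_intros simp: field_simps)
  then show ?thesis
    using std_normal_density_add_plus_diff[of x s] std_normal_density_pos[of x] by simp
qed

lemma cosh_gauss_integral_zero: "cosh_gauss_integral x 0 = 0"
  by (simp add: cosh_gauss_integral_def)

lemma Phi_window_eq_cosh_gauss_integral: "Phi_window c x = 2 * \<phi> x * cosh_gauss_integral x c"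
  using std_normal_density_pos[of x] by (simp add: cosh_gauss_integral_def Phi_window_def)

lemma Phi_window_at_zero: "Phi_window c 0 = 2 * \<phi> 0 * gauss_integral c"
  using Phi_minus[of c] by (simp add: Phi_window_def gauss_integral_def std_normal_density_eq algebra_simps)

lemma cosh_gauss_integral_lower:
  assumes "x > 0" "s > 0"
  shows "cosh (x * s) * gauss_integral s - cosh_gauss_integral x s
    > exp (- (s^2) / 2) * (s * cosh (x * s) - sinh (x * s) / x)"
proof -
  define E where "E s = cosh (x * s) * gauss_integral s - cosh_gauss_integral x s
    - exp (- (s^2) / 2) * (s * cosh (x * s) - sinh (x * s) / x)" for s
  have "(E has_real_derivative x * sinh (x * s) * (gauss_integral s - s * exp (- (s^2) / 2))
      + s * exp (- (s^2) / 2) * (x * s * cosh (x * s) - sinh (x * s)) / x) (at s)" for s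
    unfolding E_def[abs_def] using assms(1)
    by (auto intro!: derivative_eq_intros gauss_integral_has_real_derivative
        cosh_gauss_integral_has_real_derivative simp: field_simps power2_eq_square)
  moreover have "x * sinh (x * s) * (gauss_integral s - s * exp (- (s^2) / 2))
      + s * exp (- (s^2) / 2) * (x * s * cosh (x * s) - sinh (x * s)) / x > 0" if "s > 0" for s
    using gauss_integral_gt[OF that] sinh_less_mult_cosh[of "x * s"] assms(1) that
    by (intro add_pos_pos) auto
  ultimately have "E 0 < E s"
    by (rule DERIV_pos_open_imp_less[OF assms(2)])
  then show ?thesis
    by (simp add: E_def gauss_integral_zero cosh_gauss_integral_zero)
qed

lemma cosh_gauss_integral_less_sinh:
  assumes "x > 0" "s > 0"
  shows "x * s * cosh_gauss_integral x s < sinh (x * s) * gauss_integral s"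
proof -
  have "((\<lambda>s. sinh (x * s) * gauss_integral s / x - s * cosh_gauss_integral x s) has_real_derivative
      cosh (x * s) * gauss_integral s - cosh_gauss_integral x s
      - exp (- (s^2) / 2) * (s * cosh (x * s) - sinh (x * s) / x)) (at s)" for s
    using assms(1) by (auto intro!: derivative_eq_intros gauss_integral_has_real_derivative
        cosh_gauss_integral_has_real_derivative simp: field_simps)
  from DERIV_pos_open_imp_less[OF assms(2) this] cosh_gauss_integral_lower[OF assms(1)]
  have "s * cosh_gauss_integral x s < sinh (x * s) * gauss_integral s / x"
    by (simp add: gauss_integral_zero cosh_gauss_integral_zero)
  then show ?thesis
    using assms(1) by (simp add: field_simps)
qed

lemma Phi_window_deriv_lt:
  assumes "x > 0" "c > 0"
  shows "\<phi> (x + c) - \<phi> (x - c) < - normal_beta c * x * Phi_window c x"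
proof -
  have "normal_beta c * x * Phi_window c x
      = 2 * \<phi> x * exp (- (c^2) / 2) * (x * c * cosh_gauss_integral x c) / gauss_integral c"
    by (simp add: normal_beta_def Phi_window_eq_cosh_gauss_integral)
  also have "\<dots> < 2 * \<phi> x * exp (- (c^2) / 2) * sinh (x * c)"
    using cosh_gauss_integral_less_sinh[OF assms] gauss_integral_pos[OF assms(2)]
      std_normal_density_pos[of x] by (simp add: field_simps)
  also have "\<dots> = \<phi> (x - c) - \<phi> (x + c)"
    by (rule std_normal_density_diff_minus_add[symmetric])
  finally show ?thesis
    by simp
qed

lemma Phi_window_mult_exp_beta_less:
  assumes "c > 0" "0 \<le> a" "a < b"
  shows "Phi_window c b * exp (normal_beta c * b^2 / 2) < Phi_window c a * exp (normal_beta c * a^2 / 2)"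
proof -
  let ?\<beta> = "normal_beta c"
  have "((\<lambda>t. - (Phi_window c t * exp (?\<beta> * t^2 / 2))) has_real_derivative
      - exp (?\<beta> * t^2 / 2) * (\<phi> (t + c) - \<phi> (t - c) + ?\<beta> * t * Phi_window c t)) (at t)" for t
    by (auto intro!: derivative_eq_intros simp: algebra_simps)
  moreover have "- exp (?\<beta> * t^2 / 2) * (\<phi> (t + c) - \<phi> (t - c) + ?\<beta> * t * Phi_window c t) > 0"
    if "a < t" for t
    using Phi_window_deriv_lt[of t c] assms that by (simp add: mult_less_0_iff)
  ultimately have "- (Phi_window c a * exp (?\<beta> * a^2 / 2)) < - (Phi_window c b * exp (?\<beta> * b^2 / 2))"
    by (rule DERIV_pos_open_imp_less[OF assms(3)])
  then show ?thesis
    by simp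
qed

lemma exp_half_square_diff:
  fixes k x y :: real
  shows "exp (- k * ((y^2 - x^2) / 2)) = exp (k * x^2 / 2) / exp (k * y^2 / 2)"
  by (simp add: exp_diff[symmetric] algebra_simps diff_divide_distrib)

lemma Phi_window_ratio_bounds:
  assumes "c > 0" "\<bar>x\<bar> < \<bar>y\<bar>"
  shows "exp (- 1 * ((y^2 - x^2) / 2)) < Phi_window c y / Phi_window c x
    \<and> Phi_window c y / Phi_window c x < exp (- normal_beta c * ((y^2 - x^2) / 2))"
  using Phi_window_mult_exp_less[OF assms(1) abs_ge_zero assms(2)]
    Phi_window_mult_exp_beta_less[OF assms(1) abs_ge_zero assms(2)] Phi_window_pos[OF assms(1), of x]
  unfolding exp_half_square_diff by (simp add: Phi_window_abs field_simps)

lemma Phi_window_le: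
  assumes "c > 0" "y \<ge> c"
  shows "Phi_window c y \<le> 2 * c * \<phi> (y - c)"
proof -
  obtain z where z: "y - c < z" "z < y + c" "Phi (y + c) - Phi (y - c) = ((y + c) - (y - c)) * \<phi> z"
    using MVT2[of "y - c" "y + c" Phi \<phi>] assms(1) Phi_has_real_derivative by auto
  have "(y - c)^2 \<le> z^2"
    using z assms(2) by (intro power_mono) auto
  then have "\<phi> z \<le> \<phi> (y - c)"
    by (simp add: std_normal_density_eq divide_right_mono)
  then show ?thesis
    using z assms(1) by (simp add: Phi_window_def)
qed

text \<open>Optimality of 1: \<open>g y \<le> 2 c \<phi>(y - c)\<close> decays like \<open>exp (- y\<^sup>2/2 + c y)\<close>.\<close>

lemma Phi_window_ratio_lower_sharp:
  assumes "c > 0" "a < 1"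
  shows "\<exists>x y. \<bar>x\<bar> < \<bar>y\<bar> \<and> \<not> exp (- a * ((y^2 - x^2) / 2)) < Phi_window c y / Phi_window c x"
proof -
  have "- ((y - c)^2) / 2 + a * y^2 / 2 = - (c^2) / 2 + ((a - 1) * y^2 / 2 + c * y)" for y
    by (simp add: power2_eq_square field_simps)
  then have bound_eq: "2 * c * \<phi> (y - c) * exp (a * y^2 / 2)
      = 2 * c / sqrt (2 * pi) * exp (- (c^2) / 2) * exp ((a - 1) * y^2 / 2 + c * y)" for y
    by (simp add: std_normal_density_eq mult_exp_exp)
  have "((\<lambda>y. 2 * c * \<phi> (y - c) * exp (a * y^2 / 2)) \<longlongrightarrow> 0) at_top"
    unfolding bound_eq by (rule tendsto_mult_right_zero) (use assms(2) in real_asymp)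
  from order_tendstoD(2)[OF this Phi_window_pos[OF assms(1), of 0]]
  have "\<forall>\<^sub>F y in at_top. 2 * c * \<phi> (y - c) * exp (a * y^2 / 2) < Phi_window c 0 \<and> y \<ge> c"
    by (simp add: eventually_conj_iff eventually_ge_at_top)
  then obtain y where y: "2 * c * \<phi> (y - c) * exp (a * y^2 / 2) < Phi_window c 0" "y \<ge> c"
    using eventually_happens by force
  then have "Phi_window c y * exp (a * y^2 / 2) < Phi_window c 0"
    using Phi_window_le[OF assms(1) y(2)] by (smt (verit) exp_gt_zero mult_right_mono)
  then have "\<not> exp (- a * ((y^2 - 0^2) / 2)) < Phi_window c y / Phi_window c 0"
    using Phi_window_pos[OF assms(1), of 0] unfolding exp_half_square_diff by (simp add: field_simps)
  moreover have "\<bar>0\<bar> < \<bar>y\<bar>"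
    using y(2) assms(1) by simp
  ultimately show ?thesis
    by blast
qed

text \<open>Optimality of \<open>\<beta>\<close>: for small \<open>t = y\<^sup>2/2\<close>,
  \<open>g y / g 0 \<ge> exp (-t) (1 + (1 - \<beta>) t)\<close>, which exceeds \<open>exp (- b t)\<close> when \<open>b > \<beta>\<close>.\<close>

lemma cosh_gauss_integral_ge:
  assumes "y > 0" "c > 0"
  shows "cosh_gauss_integral y c \<ge> gauss_integral c + y^2 / 2 * (gauss_integral c - c * exp (- (c^2) / 2))"
proof -
  have "((\<lambda>s. cosh_gauss_integral y s - gauss_integral s - y^2 / 2 * (gauss_integral s - s * exp (- (s^2) / 2)))
      has_real_derivative exp (- (s^2) / 2) * (cosh (y * s) - (1 + (y * s)^2 / 2))) (at s)" for s
    by (auto intro!: derivative_eq_intros cosh_gauss_integral_has_real_derivative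
        gauss_integral_has_real_derivative simp: power2_eq_square algebra_simps)
      (simp add: field_simps)
  moreover have "exp (- (s^2) / 2) * (cosh (y * s) - (1 + (y * s)^2 / 2)) \<ge> 0" if "s > 0" for s
    using one_plus_half_square_le_cosh[of "y * s"] that assms(1) by simp
  ultimately have "cosh_gauss_integral y 0 - gauss_integral 0 - y^2 / 2 * (gauss_integral 0 - 0 * exp (- (0^2) / 2))
      \<le> cosh_gauss_integral y c - gauss_integral c - y^2 / 2 * (gauss_integral c - c * exp (- (c^2) / 2))"
    by (rule DERIV_nonneg_open_imp_le[of 0 c, OF less_imp_le[OF assms(2)]])
  then show ?thesis
    by (simp add: cosh_gauss_integral_zero gauss_integral_zero)
qed

lemma Phi_window_ratio_upper_sharp:
  assumes "c > 0" "b > normal_beta c"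
  shows "\<exists>x y. \<bar>x\<bar> < \<bar>y\<bar> \<and> \<not> Phi_window c y / Phi_window c x < exp (- b * ((y^2 - x^2) / 2))"
proof -
  let ?\<beta> = "normal_beta c" and ?W = "gauss_integral c"
  have "\<forall>\<^sub>F t in at_right 0. exp ((1 - b) * t) < 1 + (1 - ?\<beta>) * t \<and> t > 0"
    unfolding eventually_conj_iff using assms(2) by (intro conjI eventually_at_right_less) real_asymp
  then obtain t where t: "exp ((1 - b) * t) < 1 + (1 - ?\<beta>) * t" "t > 0"
    using eventually_happens by force
  define y where "y = sqrt (2 * t)"
  have y: "y > 0" "y^2 = 2 * t"
    using t(2) by (auto simp: y_def)
  have W: "?W > 0"
    using gauss_integral_pos[OF assms(1)] .
  have "exp (- b * ((y^2 - 0^2) / 2)) = exp (- t) * exp ((1 - b) * t)"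
    using y(2) by (simp add: mult_exp_exp algebra_simps)
  also have "\<dots> < exp (- t) * (1 + (1 - ?\<beta>) * t)"
    using t(1) by simp
  also have "\<dots> = exp (- t) * ((?W + t * (?W - c * exp (- (c^2) / 2))) / ?W)"
    using W by (simp add: normal_beta_def field_simps)
  also have "\<dots> \<le> exp (- t) * (cosh_gauss_integral y c / ?W)"
    using cosh_gauss_integral_ge[OF y(1) assms(1)] y(2) W by (simp add: divide_right_mono)
  also have "\<dots> = Phi_window c y / Phi_window c 0"
    using y(2) W std_normal_density_pos[of 0]
    by (simp add: Phi_window_eq_cosh_gauss_integral[of c y] Phi_window_at_zero std_normal_density_eq)
  finally have "\<not> Phi_window c y / Phi_window c 0 < exp (- b * ((y^2 - 0^2) / 2))"
    by simp
  with y(1) show ?thesis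
    by (intro exI[of _ 0] exI[of _ y]) simp
qed

lemma gauss_integral_less:
  assumes "s > 0"
  shows "gauss_integral s < s * exp (- (s^2) / 6 + s^4 / 90)"
proof -
  have "((\<lambda>s. s * exp (- (s^2) / 6 + s^4 / 90) - gauss_integral s) has_real_derivative
      exp (- (s^2) / 6 + s^4 / 90) * (1 - s^2 / 3 + 2 * s^4 / 45) - exp (- (s^2) / 2)) (at s)" for s :: real
    by (auto intro!: derivative_eq_intros gauss_integral_has_real_derivative
        simp: field_simps power2_eq_square power4_eq_xxxx)
  moreover have "exp (- (s^2) / 6 + s^4 / 90) * (1 - s^2 / 3 + 2 * s^4 / 45) - exp (- (s^2) / 2) > 0"
    if "s > 0" for s :: real
  proof -
    have e: "exp (- (s^2) / 6 + s^4 / 90) = exp (- (s^2) / 2) * exp (s^2 / 3 + (s^2)^2 / 90)"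
      by (simp add: exp_add[symmetric] power2_eq_square power4_eq_xxxx field_simps)
    have "exp (- (s^2) / 2) * 1
        < exp (- (s^2) / 2) * ((1 - s^2 / 3 + 2 * (s^2)^2 / 45) * exp (s^2 / 3 + (s^2)^2 / 90))"
      using one_less_poly_mult_exp[of "s^2"] that by simp
    then show ?thesis
      unfolding e by (simp add: power2_eq_square power4_eq_xxxx algebra_simps)
  qed
  ultimately have "0 * exp (- (0^2) / 6 + 0^4 / 90) - gauss_integral 0
      < s * exp (- (s^2) / 6 + s^4 / 90) - gauss_integral s"
    by (rule DERIV_pos_open_imp_less[OF assms])
  then show ?thesis
    by (simp add: gauss_integral_zero)
qed

lemma normal_beta_gt:
  assumes "c > 0"
  shows "normal_beta c > exp (- (c^2) / 3 - c^4 / 90)"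
proof -
  have "gauss_integral c * exp (- (c^2) / 3 - c^4 / 90)
      < c * exp (- (c^2) / 6 + c^4 / 90) * exp (- (c^2) / 3 - c^4 / 90)"
    using gauss_integral_less[OF assms] by simp
  also have "\<dots> = c * exp (- (c^2) / 2)"
    by (simp add: mult_exp_exp)
  finally show ?thesis
    using gauss_integral_pos[OF assms] by (simp add: normal_beta_def field_simps)
qed

theorem lemma3p3:
  fixes h :: real
  assumes "h \<noteq> 0"
  defines "\<beta> \<equiv> (h / 2 * exp (- (h^2) / 8)) / (sqrt (2 * pi) * (Phi (h / 2) - 1 / 2))"
  defines "R \<equiv> (\<lambda>x y. (Phi (y + h / 2) - Phi (y - h / 2)) / (Phi (x + h / 2) - Phi (x - h / 2)))"
  shows "(\<forall>x y::real. \<bar>x\<bar> < \<bar>y\<bar> \<longrightarrow>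
            exp (- 1 * ((y^2 - x^2) / 2)) < R x y \<and> R x y < exp (- \<beta> * ((y^2 - x^2) / 2)))
       \<and> (\<forall>a::real. a < 1 \<longrightarrow> (\<exists>x y::real. \<bar>x\<bar> < \<bar>y\<bar> \<and> \<not> (exp (- a * ((y^2 - x^2) / 2)) < R x y)))
       \<and> (\<forall>b::real. b > \<beta> \<longrightarrow> (\<exists>x y::real. \<bar>x\<bar> < \<bar>y\<bar> \<and> \<not> (R x y < exp (- b * ((y^2 - x^2) / 2)))))
       \<and> \<beta> > exp (- (h^2) / 12 - h^4 / 1440)
       \<and> exp (- (h^2) / 12 - h^4 / 1440) > 1 - h^2 / 12"
proof -
  define c where "c = \<bar>h\<bar> / 2"
  have c: "c > 0"
    using assms(1) by (simp add: c_def)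
  have "R x y = Phi_window (h / 2) y / Phi_window (h / 2) x" for x y
    by (simp add: R_def Phi_window_def)
  then have R: "R = (\<lambda>x y. Phi_window c y / Phi_window c x)"
    by (cases "h \<ge> 0") (auto simp: c_def Phi_window_minus_width[of "h / 2", simplified] intro!: ext)
  have "\<beta> = normal_beta (h / 2)"
    by (simp add: \<beta>_def normal_beta_def gauss_integral_def power_divide)
  then have \<beta>: "\<beta> = normal_beta c"
    by (cases "h \<ge> 0") (auto simp: c_def normal_beta_minus[of "h / 2", simplified])
  have h: "- (h^2) / 12 - h^4 / 1440 = - (c^2 / 3) - (c^2 / 3)^2 / 10" "h^2 / 12 = c^2 / 3"
    by (simp_all add: c_def power_divide power_abs flip: power_mult)
  show ?thesis
    unfolding R \<beta> h
    using Phi_window_ratio_bounds[OF c] Phi_window_ratio_lower_sharp[OF c]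
      Phi_window_ratio_upper_sharp[OF c] normal_beta_gt[OF c] one_minus_less_exp[of "c^2 / 3"] c
    by (simp add: power_divide flip: power_mult)
qed

end
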